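(* Let $h:Q\to P$ be an $\iota$-map of positive opetopes, $k\ge0$, $q\in Q_{k+2}$ and $q'\in\delta(q)$ such that $h(q),h(q')\in P_k$. Then $h(q')=h(\gamma(q))$.
   Context: A positive hypergraph $S$ consists of finite sets $S_k$ ($k\in\mathbb{N}$), only finitely many nonempty, functions $\gamma:S_{k+1}\to S_k$, and for each $k$ an assignment $\delta$ sending each $a\in S_{k+1}$ to a nonempty subset $\delta(a)\subseteq S_k$, with $\delta(a)$ a singleton for $a\in S_1$. A face is identified with its singleton; $\gamma(X)=\{\gamma(a):a\in X\}$, $\delta(X)=\bigcup_{a\in X}\delta(a)$. For $k>0$ the lower order $<^-$ on $S_k$ is the transitive closure of: $a\lhd b$ iff $\gamma(a)\in\delta(b)$. The upper order $<^+$ on $S_k$ is the transitive closure of: $a\lhd b$ iff there is $\alpha\in S_{k+1}$ with $a\in\delta(\alpha)$, $\gamma(\alpha)=b$; $a\perp^{\pm}b$ iff $a<^{\pm}b$ or $b<^{\pm}a$. A positive opetopic cardinal: $S_0\ne\emptyset$; globularity ($\gamma\gamma(a)=\gamma\delta(a)-\delta\delta(a)$, $\delta\gamma(a)=\delta\delta(a)-\gamma\delta(a)$ for $\dim a\ge2$); each $<^+$ a strict order, linear on $S_0$; for $k>0$, $\perp^-\cap\perp^+=\emptyset$ on $S_k$; for $x\in S_{k-1}$, $\{a:\gamma(a)=x\}$ and $\{a:x\in\delta(a)\}$ linearly ordered by $<^+$. A positive opetope: additionally $|P_m-\delta(P_{m+1})|\le1$ for all $m$. $\gamma^{(k)}(p)=p$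 if $\dim p\le k$, else $\gamma^{(k)}(p)=\gamma(\gamma^{(k+1)}(p))$. An $\iota$-map $h:Q\to P$ of positive opetopes is a function on faces with: $\dim h(q)\le\dim q$; $h(\gamma^{(k)}(q))=\gamma^{(k)}(h(q))$ for $k\ge0$, $q\in Q_{k+1}$; and, with $\ker(h)=\{q:\dim q>\dim h(q)\}$, for $q\in Q_{k+1}$: if $\dim h(q)=k+1$, $h$ restricts to a bijection $\delta(q)-\ker(h)\to\delta(h(q))$; if $\dim h(q)=k$, to a bijection $\delta(q)-\ker(h)\to\{h(q)\}$; if $\dim h(q)<k$, $\delta(q)\subseteq\ker(h)$. *)

theory Defs
  imports Main
begin

text \<open>A positive hypergraph: a finite set of faces, each with a dimension;
  for faces of dimension k+1 a codomain face gam a of dimension k and a nonempty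
  set of domain faces del a of dimension k (a singleton when k = 0).
  The values of gam/del on faces of dimension 0 are irrelevant.\<close>

record 'a phg =
  faces :: "'a set"
  dm    :: "'a \<Rightarrow> nat"
  gam   :: "'a \<Rightarrow> 'a"
  del   :: "'a \<Rightarrow> 'a set"

definition lev :: "'a phg \<Rightarrow> nat \<Rightarrow> 'a set" where
  "lev S k = {a \<in> faces S. dm S a = k}"

definition gamS :: "'a phg \<Rightarrow> 'a set \<Rightarrow> 'a set" where
  "gamS S X = gam S ` X"

definition delS :: "'a phg \<Rightarrow> 'a set \<Rightarrow> 'a set" where
  "delS S X = (\<Union>a\<in>X. del S a)"

definition pos_hypergraph :: "'a phg \<Rightarrow> bool" where
  "pos_hypergraph S \<longleftrightarrow> finite (faces S) \<and>
     (\<forall>k. \<forall>a\<in>lev S (Suc k). gam S a \<in> lev S k \<and> del S a \<noteq> {} \<and> del S a \<subseteq> lev S k) \<and>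
     (\<forall>a\<in>lev S 1. \<exists>b. del S a = {b})"

definition lower_gen :: "'a phg \<Rightarrow> ('a \<times> 'a) set" where
  "lower_gen S = {(a,b). \<exists>k>0. a \<in> lev S k \<and> b \<in> lev S k \<and> gam S a \<in> del S b}"

definition upper_gen :: "'a phg \<Rightarrow> ('a \<times> 'a) set" where
  "upper_gen S = {(a,b). \<exists>k. a \<in> lev S k \<and> b \<in> lev S k \<and>
      (\<exists>\<alpha>\<in>lev S (Suc k). a \<in> del S \<alpha> \<and> gam S \<alpha> = b)}"

definition lower_ord :: "'a phg \<Rightarrow> ('a \<times> 'a) set" where
  "lower_ord S = (lower_gen S)\<^sup>+"

definition upper_ord :: "'a phg \<Rightarrow> ('a \<times> 'a) set" where
  "upper_ord S = (upper_gen S)\<^sup>+"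

definition comparable :: "('a \<times> 'a) set \<Rightarrow> 'a \<Rightarrow> 'a \<Rightarrow> bool" where
  "comparable r a b \<longleftrightarrow> (a,b) \<in> r \<or> (b,a) \<in> r"

definition pos_opetopic_cardinal :: "'a phg \<Rightarrow> bool" where
  "pos_opetopic_cardinal S \<longleftrightarrow> pos_hypergraph S \<and>
     lev S 0 \<noteq> {} \<and>
     (\<forall>a\<in>faces S. 2 \<le> dm S a \<longrightarrow>
        {gam S (gam S a)} = gamS S (del S a) - delS S (del S a) \<and>
        del S (gam S a) = delS S (del S a) - gamS S (del S a)) \<and>
     irrefl (upper_ord S) \<and>
     total_on (lev S 0) (upper_ord S) \<and>
     (\<forall>k>0. \<forall>a\<in>lev S k. \<forall>b\<in>lev S k.
        \<not> (comparable (lower_ord S) a b \<and> comparable (upper_ord S) a b)) \<and>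
     (\<forall>k. \<forall>x\<in>lev S k.
        total_on {a\<in>lev S (Suc k). gam S a = x} (upper_ord S) \<and>
        total_on {a\<in>lev S (Suc k). x \<in> del S a} (upper_ord S))"

definition pos_opetope :: "'a phg \<Rightarrow> bool" where
  "pos_opetope P \<longleftrightarrow> pos_opetopic_cardinal P \<and>
     (\<forall>m. card (lev P m - delS P (lev P (Suc m))) \<le> 1)"

function gamk :: "'a phg \<Rightarrow> nat \<Rightarrow> 'a \<Rightarrow> 'a" where
  "gamk S k p = (if dm S p \<le> k then p else gam S (gamk S (Suc k) p))"
  by auto
termination by (relation "measure (\<lambda>(S,k,p). dm S p - k)") auto

declare gamk.simps [simp del]

definition ker :: "'a phg \<Rightarrow> 'b phg \<Rightarrow> ('a \<Rightarrow> 'b) \<Rightarrow> 'a set" where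
  "ker Q P h = {q \<in> faces Q. dm P (h q) < dm Q q}"

definition iota_map :: "'a phg \<Rightarrow> 'b phg \<Rightarrow> ('a \<Rightarrow> 'b) \<Rightarrow> bool" where
  "iota_map Q P h \<longleftrightarrow> pos_opetope Q \<and> pos_opetope P \<and>
     h ` faces Q \<subseteq> faces P \<and>
     (\<forall>q\<in>faces Q. dm P (h q) \<le> dm Q q) \<and>
     (\<forall>k. \<forall>q\<in>lev Q (Suc k). h (gamk Q k q) = gamk P k (h q)) \<and>
     (\<forall>k. \<forall>q\<in>lev Q (Suc k).
        (dm P (h q) = Suc k \<longrightarrow> bij_betw h (del Q q - ker Q P h) (del P (h q))) \<and>
        (dm P (h q) = k \<longrightarrow> bij_betw h (del Q q - ker Q P h) {h q}) \<and>
        (dm P (h q) < k \<longrightarrow> del Q q \<subseteq> ker Q P h))"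

end

theory Submission
  imports Defs
begin

text \<open>Since h q has dimension k, the codomain of q and the codomain of that codomain are both
  sent to h q. Consider the domain faces r of q with h r = h q' of dimension k. If the codomain of
  such an r lies in the domain of another domain face r' of q, then r' is collapsed as well and
  h r' = h (gam r) = h r. By globularity every codomain gam r other than gam (gam q) lies in such a
  domain, and gam r is then strictly below gam r' in the upper order. Following these steps upwards,
  finiteness and acyclicity of the upper order force us to reach a face r with gam r = gam (gam q),
  so h q' = h r = h (gam (gam q)) = h q = h (gam q).\<close>

lemma gamk_le: "dm S p \<le> k \<Longrightarrow> gamk S k p = p"
  by (simp add: gamk.simps)

lemma gamk_Suc: "dm S p = Suc k \<Longrightarrow> gamk S k p = gam S p"
  by (simp add: gamk.simps[of S k p] gamk_le)

lemma pos_opetopic_cardinal_imp_pos_hypergraph: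
  "pos_opetopic_cardinal S \<Longrightarrow> pos_hypergraph S"
  by (simp add: pos_opetopic_cardinal_def)

lemma pos_hypergraph_lev_Suc:
  assumes "pos_hypergraph S" "a \<in> lev S (Suc k)"
  shows "gam S a \<in> lev S k" "del S a \<subseteq> lev S k"
  using assms unfolding pos_hypergraph_def by blast+

lemma wf_converse_upper_ord:
  assumes "pos_opetopic_cardinal S"
  shows "wf ((upper_ord S)\<inverse>)"
proof -
  have "upper_gen S \<subseteq> faces S \<times> faces S"
    by (auto simp: upper_gen_def lev_def)
  moreover have "finite (faces S)"
    using pos_opetopic_cardinal_imp_pos_hypergraph[OF assms] by (simp add: pos_hypergraph_def)
  ultimately have "finite (upper_ord S)"
    unfolding upper_ord_def by (meson finite_SigmaI finite_subset finite_trancl)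
  moreover have "acyclic (upper_ord S)"
    using assms unfolding pos_opetopic_cardinal_def acyclic_def upper_ord_def irrefl_def by simp
  ultimately show ?thesis
    by (rule finite_acyclic_wf_converse)
qed

lemma gam_del_eq_gam_gam_or_in_del:
  assumes "pos_opetopic_cardinal S" "a \<in> faces S" "2 \<le> dm S a" "r \<in> del S a"
  shows "gam S r = gam S (gam S a) \<or> (\<exists>r'\<in>del S a. gam S r \<in> del S r')"
proof -
  have "{gam S (gam S a)} = gamS S (del S a) - delS S (del S a)"
    using assms(1-3) unfolding pos_opetopic_cardinal_def by blast
  moreover have "gam S r \<in> gamS S (del S a)"
    using assms(4) by (simp add: gamS_def)
  ultimately show ?thesis
    by (auto simp: delS_def)
qed

lemma closed_del_subset_meets_gam_gam:
  assumes S: "pos_opetopic_cardinal S" and a: "a \<in> lev S (Suc (Suc k))"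
    and "r\<^sub>0 \<in> R" and R: "R \<subseteq> del S a"
    and closed: "\<And>r r'. r \<in> R \<Longrightarrow> r' \<in> del S a \<Longrightarrow> gam S r \<in> del S r' \<Longrightarrow> r' \<in> R"
  shows "\<exists>r\<in>R. gam S r = gam S (gam S a)"
proof -
  obtain z where "z \<in> gam S ` R" and z_max: "\<And>y. (y, z) \<in> (upper_ord S)\<inverse> \<Longrightarrow> y \<notin> gam S ` R"
    using wfE_min[OF wf_converse_upper_ord[OF S], of "gam S r\<^sub>0" "gam S ` R"] \<open>r\<^sub>0 \<in> R\<close>
    by blast
  then obtain r where r: "r \<in> R" "z = gam S r" by blast
  have dels: "del S a \<subseteq> lev S (Suc k)"
    using pos_hypergraph_lev_Suc[OF pos_opetopic_cardinal_imp_pos_hypergraph[OF S] a] by blast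
  have "gam S r = gam S (gam S a)"
  proof (rule ccontr)
    have "a \<in> faces S" "2 \<le> dm S a"
      using a by (auto simp: lev_def)
    moreover assume "gam S r \<noteq> gam S (gam S a)"
    ultimately obtain r' where r': "r' \<in> del S a" "gam S r \<in> del S r'"
      using gam_del_eq_gam_gam_or_in_del[OF S] r(1) R by blast
    have "r \<in> lev S (Suc k)" "r' \<in> lev S (Suc k)"
      using r(1) r'(1) R dels by auto
    then have "(gam S r, gam S r') \<in> upper_gen S"
      using r'(2) pos_hypergraph_lev_Suc(1)[OF pos_opetopic_cardinal_imp_pos_hypergraph[OF S]] unfolding upper_gen_def by blast
    moreover have "r' \<in> R"
      using closed r(1) r' by blast
    ultimately show False
      using z_max r(2) unfolding upper_ord_def by blast
  qed
  then show ?thesis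
    using r by blast
qed

lemma iota_map_imp_pos_opetopic_cardinal: "iota_map Q P h \<Longrightarrow> pos_opetopic_cardinal Q"
  by (simp add: iota_map_def pos_opetope_def)

lemma iota_map_gam_eq:
  assumes "iota_map Q P h" "q \<in> lev Q (Suc k)" "dm P (h q) \<le> k"
  shows "h (gam Q q) = h q"
proof -
  have "h (gamk Q k q) = gamk P k (h q)"
    using assms(1,2) unfolding iota_map_def by blast
  then show ?thesis
    using assms(2,3) by (simp add: gamk_Suc gamk_le lev_def)
qed

lemma iota_map_del_subset_ker:
  assumes "iota_map Q P h" "q \<in> lev Q (Suc k)" "dm P (h q) < k"
  shows "del Q q \<subseteq> ker Q P h"
  using assms unfolding iota_map_def by blast

lemma iota_map_del_notin_ker:
  assumes "iota_map Q P h" "r' \<in> lev Q (Suc k)" "dm P (h r') \<le> k"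
    and "x \<in> del Q r'" "x \<notin> ker Q P h"
  shows "dm P (h r') = k" "h x = h r'"
proof -
  show k: "dm P (h r') = k"
    using iota_map_del_subset_ker[OF assms(1,2)] assms(3-5) by fastforce
  have "bij_betw h (del Q r' - ker Q P h) {h r'}"
    using assms(1,2) k unfolding iota_map_def by blast
  then show "h x = h r'"
    using assms(4,5) by (auto simp: bij_betw_def)
qed

lemma iota_map_collapse_spreads_along_del:
  assumes h: "iota_map Q P h" and q: "q \<in> lev Q (Suc (Suc k))" "dm P (h q) \<le> k"
    and r: "r \<in> del Q q" "dm P (h r) = k"
    and r': "r' \<in> del Q q" "gam Q r \<in> del Q r'"
  shows "dm P (h r') = k" "h r' = h r"
proof -
  have Q: "pos_hypergraph Q"
    using h by (intro pos_opetopic_cardinal_imp_pos_hypergraph iota_map_imp_pos_opetopic_cardinal)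
  have del_q: "del Q q \<subseteq> lev Q (Suc k)"
    using pos_hypergraph_lev_Suc(2)[OF Q q(1)] .
  have h_gam_r: "h (gam Q r) = h r"
    using iota_map_gam_eq[OF h] r del_q by auto
  have "gam Q r \<in> lev Q k"
    using pos_hypergraph_lev_Suc(1)[OF Q] r(1) del_q by blast
  then have "gam Q r \<notin> ker Q P h"
    using h_gam_r r(2) by (auto simp: ker_def lev_def)
  moreover have "r' \<in> ker Q P h"
    using iota_map_del_subset_ker[OF h q(1)] q(2) r'(1) by auto
  then have "dm P (h r') \<le> k"
    using r'(1) del_q by (auto simp: ker_def lev_def)
  ultimately show "dm P (h r') = k" "h r' = h r"
    using iota_map_del_notin_ker[OF h, of r' k "gam Q r"] r' del_q h_gam_r by auto
qed

theorem mainTheorem8: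
  fixes Q :: "'a phg" and P :: "'b phg" and h :: "'a \<Rightarrow> 'b" and k :: nat
  assumes "iota_map Q P h"
    and "q \<in> lev Q (Suc (Suc k))"
    and "q' \<in> del Q q"
    and "h q \<in> lev P k" and "h q' \<in> lev P k"
  shows "h q' = h (gam Q q)"
proof -
  have Q: "pos_opetopic_cardinal Q"
    using iota_map_imp_pos_opetopic_cardinal[OF assms(1)] .
  have hq: "dm P (h q) = k"
    using assms(4) by (simp add: lev_def)
  have gam_q: "gam Q q \<in> lev Q (Suc k)" and del_q: "del Q q \<subseteq> lev Q (Suc k)"
    using pos_hypergraph_lev_Suc[OF pos_opetopic_cardinal_imp_pos_hypergraph[OF Q] assms(2)]
    by blast+
  have h_gam_q: "h (gam Q q) = h q"
    using iota_map_gam_eq[OF assms(1,2)] hq by simp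
  have h_gam_gam_q: "h (gam Q (gam Q q)) = h q"
    using iota_map_gam_eq[OF assms(1) gam_q] h_gam_q hq by simp
  define R where "R = {r \<in> del Q q. dm P (h r) = k \<and> h r = h q'}"
  have "\<exists>r\<in>R. gam Q r = gam Q (gam Q q)"
  proof (rule closed_del_subset_meets_gam_gam[OF Q assms(2)])
    show "q' \<in> R" "R \<subseteq> del Q q"
      using assms(3,5) by (auto simp: R_def lev_def)
  next
    fix r r' assume "r \<in> R" and r': "r' \<in> del Q q" "gam Q r \<in> del Q r'"
    then have "r \<in> del Q q" "dm P (h r) = k" "h r = h q'"
      unfolding R_def by blast+
    then show "r' \<in> R"
      using iota_map_collapse_spreads_along_del[OF assms(1,2) eq_imp_le[OF hq] _ _ r'] r'(1)
      by (simp add: R_def)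
  qed
  then obtain r where r: "r \<in> R" "gam Q r = gam Q (gam Q q)"
    by blast
  have "h (gam Q r) = h r"
    using iota_map_gam_eq[OF assms(1)] r(1) del_q by (auto simp: R_def)
  then show ?thesis
    using r h_gam_gam_q h_gam_q by (simp add: R_def)
qed

end
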